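(* Let $m\ge 2$ be even and let $\mathcal{X}$ be the $2^m$-QAM constellation, i.e. the Cartesian product of two $2^{m/2}$-PAM constellations (in-phase and quadrature), labeled by the binary reflected Gray mapping (the Cartesian product of binary reflected Gray mappings of the two PAM components), with $b_j(x)$ the $j$-th label bit of $x$. Consider the complex AWGN channel $Y=\sqrt{\mathsf{snr}}\,X+Z$, with $Z$ a zero-mean unit-variance circularly symmetric complex Gaussian. For bit distributions $P_{B_1},\dots,P_{B_m}$ on $\{0,1\}$, let the symbol $X$ have distribution $\prod_{j=1}^mP_{B_j}(b_j(x))$ on the points of the constellation, normalized (translated and scaled) so that $\mathbb{E}[X]=0$ and $\mathbb{E}[|X|^2]=1$. Define the shaped BICM capacity $$C_{\rm bicm}(\mathsf{snr})=\sup_{P_{B_1},\dots,P_{B_m}}\sum_{j=1}^m I(B_j;Y)$$ (mutual informations in nats). Then, as $\mathsf{snr}\to0$, $$C_{\rm bicm}(\mathsf{snr})=c_1\,\mathsf{snr}+c_2\,\mathsf{snr}^2+o(\mathsf{snr}^2)\quad\text{with } c_1=1,\ c_2=-\tfrac12,$$ i.e. BICM with shaping over QAM with binary reflected Gray mapping is first- and second-order optimal in the wideband regime.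
   Context: The binary reflected Gray mapping for $k$ bits is built recursively from that for $k-1$ bits by prefixing 0 to the list of $(k-1)$-bit labels and prefixing 1 to the same list in reverse order. A scheme with rate expansion $R(\mathsf{snr})=c_1\mathsf{snr}+c_2\mathsf{snr}^2+o(\mathsf{snr}^2)$ is called first- and second-order optimal if $c_1=1$ and $c_2=-1/2$ (the coefficients of the Gaussian channel capacity $\log(1+\mathsf{snr})$). *)

theory Defs
  imports "HOL-Analysis.Analysis" "HOL-Library.Landau_Symbols"
begin

text \<open>List of k-bit labels; True encodes bit 1.  The (k+1)-bit list prefixes False to the
k-bit list and True to the reversed k-bit list.\<close>
fun brgc :: "nat \<Rightarrow> bool list list" where
  "brgc 0 = [[]]"
| "brgc (Suc k) = map (Cons False) (brgc k) @ map (Cons True) (rev (brgc k))"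

definition pam_point :: "nat \<Rightarrow> nat \<Rightarrow> real" where
  "pam_point n i = 2 * real i - (2 ^ n - 1)"

definition qam_idx :: "nat \<Rightarrow> (nat \<times> nat) set" where
  "qam_idx n = {..<2 ^ n} \<times> {..<2 ^ n}"

definition qam_point :: "nat \<Rightarrow> nat \<times> nat \<Rightarrow> complex" where
  "qam_point n k = Complex (pam_point n (fst k)) (pam_point n (snd k))"

definition qam_label :: "nat \<Rightarrow> nat \<times> nat \<Rightarrow> bool list" where
  "qam_label n k = brgc n ! fst k @ brgc n ! snd k"

section \<open>Shaped input distribution (p j = P(B_j = 1)), normalisation\<close>

definition sym_prob :: "nat \<Rightarrow> (nat \<Rightarrow> real) \<Rightarrow> nat \<times> nat \<Rightarrow> real" where
  "sym_prob m p k = (\<Prod>j<m. if qam_label (m div 2) k ! j then p j else 1 - p j)"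

definition sym_mean :: "nat \<Rightarrow> (nat \<Rightarrow> real) \<Rightarrow> complex" where
  "sym_mean m p = (\<Sum>k\<in>qam_idx (m div 2). of_real (sym_prob m p k) * qam_point (m div 2) k)"

definition sym_var :: "nat \<Rightarrow> (nat \<Rightarrow> real) \<Rightarrow> real" where
  "sym_var m p = (\<Sum>k\<in>qam_idx (m div 2). sym_prob m p k * (cmod (qam_point (m div 2) k - sym_mean m p))\<^sup>2)"

definition norm_point :: "nat \<Rightarrow> (nat \<Rightarrow> real) \<Rightarrow> nat \<times> nat \<Rightarrow> complex" where
  "norm_point m p k = (qam_point (m div 2) k - sym_mean m p) / of_real (sqrt (sym_var m p))"

definition shaping_ok :: "nat \<Rightarrow> (nat \<Rightarrow> real) \<Rightarrow> bool" where
  "shaping_ok m p \<longleftrightarrow> (\<forall>j<m. 0 \<le> p j \<and> p j \<le> 1) \<and> sym_var m p > 0"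

definition gauss_c :: "complex \<Rightarrow> real" where
  "gauss_c z = exp (- (cmod z)\<^sup>2) / pi"

definition joint_dens :: "nat \<Rightarrow> (nat \<Rightarrow> real) \<Rightarrow> real \<Rightarrow> nat \<Rightarrow> bool \<Rightarrow> complex \<Rightarrow> real" where
  "joint_dens m p snr j b y =
     (\<Sum>k\<in>{k\<in>qam_idx (m div 2). qam_label (m div 2) k ! j = b}.
        sym_prob m p k * gauss_c (y - of_real (sqrt snr) * norm_point m p k))"

definition bit_prob :: "nat \<Rightarrow> (nat \<Rightarrow> real) \<Rightarrow> nat \<Rightarrow> bool \<Rightarrow> real" where
  "bit_prob m p j b = (\<Sum>k\<in>{k\<in>qam_idx (m div 2). qam_label (m div 2) k ! j = b}. sym_prob m p k)"

definition out_dens :: "nat \<Rightarrow> (nat \<Rightarrow> real) \<Rightarrow> real \<Rightarrow> complex \<Rightarrow> real" where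
  "out_dens m p snr y =
     (\<Sum>k\<in>qam_idx (m div 2). sym_prob m p k * gauss_c (y - of_real (sqrt snr) * norm_point m p k))"

definition bit_mi :: "nat \<Rightarrow> (nat \<Rightarrow> real) \<Rightarrow> real \<Rightarrow> nat \<Rightarrow> real" where
  "bit_mi m p snr j =
     (\<Sum>b\<in>UNIV. \<integral>y. joint_dens m p snr j b y *
          ln (joint_dens m p snr j b y / (bit_prob m p j b * out_dens m p snr y)) \<partial>lborel)"

definition C_bicm :: "nat \<Rightarrow> real \<Rightarrow> real" where
  "C_bicm m snr = Sup ((\<lambda>p. \<Sum>j<m. bit_mi m p snr j) ` {p. shaping_ok m p})"

end

theory Submission
  imports Defs "HOL-Probability.Probability" "HOL-Real_Asymp.Real_Asymp"
begin

(* The shaped BICM capacity is squeezed between two bounds that agree up to O(snr^3).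

   Upper bound: under any admissible shaping the label bits are independent, so pointwise in the
   output y the bitwise information densities add up to at most the symbol information density
   (Gibbs' inequality against the product of the bit posteriors).  Bounding the output entropy by
   that of a circular Gaussian of variance 1 + snr gives sum_j I(B_j;Y) <= ln (1 + snr).

   Lower bound: making the first bit of each PAM label fair and all other bits 0 puts mass 1/4 on
   each corner of the QAM square -- this is where the Gray labelling enters.  Then only those two
   bits carry information, each one a binary antipodal channel of amplitude sqrt (snr/2), and
   ln (cosh t) <= t^2/2 - t^4/12 + t^6/45 together with the Gaussian moments bounds each bit
   information from below by snr/2 - snr^2/4 - O(snr^3). *)

lemma measurable_Complex_pair [measurable]:
  "(\<lambda>x. Complex (fst x) (snd x)) \<in> measurable (lborel \<Otimes>\<^sub>M lborel) (borel :: complex measure)"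
proof -
  have "(\<lambda>x. Complex (fst x) (snd x)) = (\<lambda>x. complex_of_real (fst x) + \<i> * complex_of_real (snd x))"
    by (auto simp: Complex_eq)
  then show ?thesis by simp
qed

lemma lborel_complex_eq_distr_pair:
  "(lborel :: complex measure) = distr (lborel \<Otimes>\<^sub>M lborel) borel (\<lambda>x. Complex (fst x) (snd x))"
proof (rule lborel_eqI)
  fix l h :: complex assume le: "\<And>b. b \<in> Basis \<Longrightarrow> l \<bullet> b \<le> h \<bullet> b"
  then have "Re l \<le> Re h" "Im l \<le> Im h"
    using le[of 1] le[of \<i>] by (auto simp: Basis_complex_def)
  moreover have "(\<lambda>x. Complex (fst x) (snd x)) -` box l h = {Re l<..<Re h} \<times> {Im l<..<Im h}"
    by (auto simp: box_def Basis_complex_def)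
  ultimately show "emeasure (distr (lborel \<Otimes>\<^sub>M lborel) borel (\<lambda>x. Complex (fst x) (snd x))) (box l h)
      = (\<Prod>b\<in>Basis. (h - l) \<bullet> b)"
    by (simp add: emeasure_distr space_pair_measure lborel.emeasure_pair_measure_Times
        Basis_complex_def ennreal_mult)
qed simp

lemma integrable_product_pair:
  fixes f h :: "real \<Rightarrow> real"
  assumes f: "integrable lborel f" and h: "integrable lborel h"
  shows "integrable (lborel \<Otimes>\<^sub>M lborel) (\<lambda>x. f (fst x) * h (snd x))"
proof -
  have [measurable]: "f \<in> borel_measurable borel" "h \<in> borel_measurable borel"
    using f h by (auto dest: borel_measurable_integrable)
  have "integrable lborel (\<lambda>x. \<bar>f x\<bar> * (\<integral>y. \<bar>h y\<bar> \<partial>lborel))"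
    using f by (intro integrable_mult_left) auto
  then show ?thesis
    using h by (intro lborel_pair.Fubini_integrable) (auto simp: abs_mult)
qed

lemma
  fixes f h :: "real \<Rightarrow> real" and F :: "complex \<Rightarrow> real"
  assumes f: "integrable lborel f" and h: "integrable lborel h"
    and F [measurable]: "F \<in> borel_measurable borel" and F_eq: "\<And>u v. F (Complex u v) = f u * h v"
  shows integrable_complex_product: "integrable lborel F"
    and integral_complex_product: "integral\<^sup>L lborel F = integral\<^sup>L lborel f * integral\<^sup>L lborel h"
proof -
  note fh = integrable_product_pair[OF f h]
  have F_pair: "(\<lambda>x. F (Complex (fst x) (snd x))) = (\<lambda>x. f (fst x) * h (snd x))"
    using F_eq by auto
  show "integrable lborel F"
    by (subst lborel_complex_eq_distr_pair, subst integrable_distr_eq) (use fh F_pair in auto)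
  have "integral\<^sup>L lborel F = (\<integral>x. f (fst x) * h (snd x) \<partial>(lborel \<Otimes>\<^sub>M lborel))"
    by (subst lborel_complex_eq_distr_pair, subst integral_distr) (use F_pair in auto)
  also have "\<dots> = integral\<^sup>L lborel f * integral\<^sup>L lborel h"
    using lborel_pair.integral_fst'[OF fh] by simp
  finally show "integral\<^sup>L lborel F = integral\<^sup>L lborel f * integral\<^sup>L lborel h" .
qed


section \<open>Gaussian densities and their moments\<close>

definition gauss_r :: "real \<Rightarrow> real \<Rightarrow> real" where
  "gauss_r a = normal_density a (sqrt (1/2))"

lemma gauss_r_eq: "gauss_r a u = exp (- (u - a)\<^sup>2) / sqrt pi"
  by (simp add: gauss_r_def normal_density_def power2_eq_square real_sqrt_mult)

lemma gauss_c_pos: "0 < gauss_c z"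
  by (simp add: gauss_c_def)

lemma gauss_c_measurable [measurable]: "gauss_c \<in> borel_measurable borel"
  unfolding gauss_c_def[abs_def] by measurable

lemma gauss_c_Complex_minus: "gauss_c (Complex u v - c) = gauss_r (Re c) u * gauss_r (Im c) v"
proof -
  have "(cmod (Complex u v - c))\<^sup>2 = (u - Re c)\<^sup>2 + (v - Im c)\<^sup>2"
    by (simp add: cmod_power2)
  then show ?thesis
    by (simp add: gauss_c_def gauss_r_eq exp_add[symmetric])
qed

lemma integrable_gauss_r_central: "integrable lborel (\<lambda>x. gauss_r a x * (x - a) ^ i)"
  unfolding gauss_r_def by (rule integrable_normal_moment) simp

lemma integral_gauss_r_central:
  "(\<integral>x. gauss_r a x * (x - a) ^ i \<partial>lborel) =
     (if even i then fact i / (4 ^ (i div 2) * fact (i div 2)) else 0)"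
proof (cases "even i")
  case True
  then obtain k where "i = 2 * k" by blast
  with integral_normal_moment_even[of "sqrt (1/2)" a k] show ?thesis
    by (simp add: gauss_r_def power2_eq_square)
next
  case False
  then obtain k where "i = 2 * k + 1" using oddE by blast
  with integral_normal_moment_odd[of "sqrt (1/2)" a k] False show ?thesis
    by (simp add: gauss_r_def)
qed

lemma gauss_r_times_power:
  "(\<lambda>x. gauss_r a x * x ^ k) =
     (\<lambda>x. \<Sum>i\<le>k. of_nat (k choose i) * a ^ (k - i) * (gauss_r a x * (x - a) ^ i))"
proof
  fix x
  have "x ^ k = ((x - a) + a) ^ k" by simp
  also have "\<dots> = (\<Sum>i\<le>k. of_nat (k choose i) * (x - a) ^ i * a ^ (k - i))"
    by (rule binomial_ring)
  finally show "gauss_r a x * x ^ k =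
      (\<Sum>i\<le>k. of_nat (k choose i) * a ^ (k - i) * (gauss_r a x * (x - a) ^ i))"
    by (simp add: sum_distrib_left algebra_simps)
qed

lemma integrable_gauss_r_power: "integrable lborel (\<lambda>x. gauss_r a x * x ^ k)"
  unfolding gauss_r_times_power by (auto intro!: integrable_gauss_r_central)

lemma integral_gauss_r_power:
  "(\<integral>x. gauss_r a x * x ^ k \<partial>lborel) =
     (\<Sum>i\<le>k. of_nat (k choose i) * a ^ (k - i) *
        (if even i then fact i / (4 ^ (i div 2) * fact (i div 2)) else 0))"
  unfolding gauss_r_times_power
  by (simp add: integral_sum integrable_gauss_r_central integral_gauss_r_central)

lemma integral_gauss_r_moments:
  "integral\<^sup>L lborel (gauss_r a) = 1"
  "(\<integral>x. gauss_r a x * x \<partial>lborel) = a"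
  "(\<integral>x. gauss_r a x * x\<^sup>2 \<partial>lborel) = a\<^sup>2 + 1/2"
  "(\<integral>x. gauss_r a x * x ^ 4 \<partial>lborel) = a ^ 4 + 3 * a\<^sup>2 + 3/4"
  "(\<integral>x. gauss_r a x * x ^ 6 \<partial>lborel) = a ^ 6 + 15/2 * a ^ 4 + 45/4 * a\<^sup>2 + 15/8"
  using integral_gauss_r_power[of a 0] integral_gauss_r_power[of a 1] integral_gauss_r_power[of a 2]
    integral_gauss_r_power[of a 4] integral_gauss_r_power[of a 6]
  by (simp_all add: atMost_nat_numeral fact_numeral binomial_fact)

lemma has_bochner_integral_gauss_c_coord_power:
  assumes proj: "proj = Re \<or> proj = Im"
  shows "has_bochner_integral lborel (\<lambda>y. gauss_c (y - c) * proj y ^ k)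
           (\<integral>x. gauss_r (proj c) x * x ^ k \<partial>lborel)"
proof -
  have int: "integrable lborel (gauss_r a)" for a
    using integrable_gauss_r_power[of a 0] by simp
  from proj show ?thesis
  proof
    assume [simp]: "proj = Re"
    have "gauss_c (Complex u v - c) * Re (Complex u v) ^ k = (gauss_r (Re c) u * u ^ k) * gauss_r (Im c) v"
      for u v by (simp add: gauss_c_Complex_minus)
    note product = integrable_complex_product[OF integrable_gauss_r_power int _ this]
      integral_complex_product[OF integrable_gauss_r_power int _ this]
    show ?thesis
      using product by (simp add: has_bochner_integral_iff integral_gauss_r_moments(1))
  next
    assume [simp]: "proj = Im"
    have "gauss_c (Complex u v - c) * Im (Complex u v) ^ k = gauss_r (Re c) u * (gauss_r (Im c) v * v ^ k)"
      for u v by (simp add: gauss_c_Complex_minus)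
    note product = integrable_complex_product[OF int integrable_gauss_r_power _ this]
      integral_complex_product[OF int integrable_gauss_r_power _ this]
    show ?thesis
      using product by (simp add: has_bochner_integral_iff integral_gauss_r_moments(1))
  qed
qed

lemma has_bochner_integral_gauss_c_coord_poly:
  assumes "proj = Re \<or> proj = Im"
  shows "has_bochner_integral lborel
     (\<lambda>y. gauss_c (y - c) * (\<alpha>\<^sub>0 + \<alpha>\<^sub>1 * proj y + \<alpha>\<^sub>2 * proj y ^ 2 + \<alpha>\<^sub>4 * proj y ^ 4 + \<alpha>\<^sub>6 * proj y ^ 6))
     (let r = proj c in \<alpha>\<^sub>0 + \<alpha>\<^sub>1 * r + \<alpha>\<^sub>2 * (r\<^sup>2 + 1/2) + \<alpha>\<^sub>4 * (r ^ 4 + 3 * r\<^sup>2 + 3/4)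
        + \<alpha>\<^sub>6 * (r ^ 6 + 15/2 * r ^ 4 + 45/4 * r\<^sup>2 + 15/8))"
proof -
  note moment = has_bochner_integral_gauss_c_coord_power[OF assms, of c]
  have "has_bochner_integral lborel
     (\<lambda>y. \<alpha>\<^sub>0 * (gauss_c (y - c) * proj y ^ 0) + \<alpha>\<^sub>1 * (gauss_c (y - c) * proj y ^ 1)
        + \<alpha>\<^sub>2 * (gauss_c (y - c) * proj y ^ 2) + \<alpha>\<^sub>4 * (gauss_c (y - c) * proj y ^ 4)
        + \<alpha>\<^sub>6 * (gauss_c (y - c) * proj y ^ 6))
     (\<alpha>\<^sub>0 * (\<integral>x. gauss_r (proj c) x * x ^ 0 \<partial>lborel) + \<alpha>\<^sub>1 * (\<integral>x. gauss_r (proj c) x * x ^ 1 \<partial>lborel)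
        + \<alpha>\<^sub>2 * (\<integral>x. gauss_r (proj c) x * x ^ 2 \<partial>lborel) + \<alpha>\<^sub>4 * (\<integral>x. gauss_r (proj c) x * x ^ 4 \<partial>lborel)
        + \<alpha>\<^sub>6 * (\<integral>x. gauss_r (proj c) x * x ^ 6 \<partial>lborel))"
    by (intro has_bochner_integral_add has_bochner_integral_mult_right moment)
  then show ?thesis
    by (simp only: power_0 power_one_right mult_1_right integral_gauss_r_moments)
      (simp add: Let_def algebra_simps)
qed

lemma has_bochner_integral_gauss_c:
  "has_bochner_integral lborel (\<lambda>y. gauss_c (y - c)) 1"
  "has_bochner_integral lborel (\<lambda>y. gauss_c (y - c) * (cmod y)\<^sup>2) (1 + (cmod c)\<^sup>2)"
  "has_bochner_integral lborel (\<lambda>y. gauss_c (y - c) * (cmod (y - c))\<^sup>2) 1"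
proof -
  note re = has_bochner_integral_gauss_c_coord_poly[of Re c] and im = has_bochner_integral_gauss_c_coord_poly[of Im c]
  show "has_bochner_integral lborel (\<lambda>y. gauss_c (y - c)) 1"
    using re[of 1 0 0 0 0] by simp
  have "has_bochner_integral lborel
      (\<lambda>y. gauss_c (y - c) * (0 + 0 * Re y + 1 * Re y ^ 2 + 0 * Re y ^ 4 + 0 * Re y ^ 6)
         + gauss_c (y - c) * (0 + 0 * Im y + 1 * Im y ^ 2 + 0 * Im y ^ 4 + 0 * Im y ^ 6))
      ((Re c)\<^sup>2 + 1/2 + ((Im c)\<^sup>2 + 1/2))"
    using has_bochner_integral_add[OF re[of 0 0 1 0 0] im[of 0 0 1 0 0]] by (simp add: Let_def)
  then show "has_bochner_integral lborel (\<lambda>y. gauss_c (y - c) * (cmod y)\<^sup>2) (1 + (cmod c)\<^sup>2)"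
    by (simp add: cmod_power2 algebra_simps)
  have "has_bochner_integral lborel
      (\<lambda>y. gauss_c (y - c) * ((Re c)\<^sup>2 + (- 2 * Re c) * Re y + 1 * Re y ^ 2 + 0 * Re y ^ 4 + 0 * Re y ^ 6)
         + gauss_c (y - c) * ((Im c)\<^sup>2 + (- 2 * Im c) * Im y + 1 * Im y ^ 2 + 0 * Im y ^ 4 + 0 * Im y ^ 6))
      1"
    using has_bochner_integral_add[OF re[of "(Re c)\<^sup>2" "- 2 * Re c" 1 0 0] im[of "(Im c)\<^sup>2" "- 2 * Im c" 1 0 0]]
    by (simp add: Let_def algebra_simps power2_eq_square)
  then show "has_bochner_integral lborel (\<lambda>y. gauss_c (y - c) * (cmod (y - c))\<^sup>2) 1"
    by (simp add: cmod_power2 power2_diff algebra_simps)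
qed

definition gauss_c_var :: "real \<Rightarrow> complex \<Rightarrow> real" where
  "gauss_c_var s y = exp (- (cmod y)\<^sup>2 / s) / (pi * s)"

lemma gauss_c_var_measurable [measurable]: "gauss_c_var s \<in> borel_measurable borel"
  unfolding gauss_c_var_def[abs_def] by measurable

lemma has_bochner_integral_gauss_c_var:
  assumes s: "s > 0"
  shows "has_bochner_integral lborel (gauss_c_var s) 1"
proof -
  have s2: "0 < sqrt (s/2)" using s by simp
  have "sqrt pi * sqrt s * (sqrt pi * sqrt s) = pi * s"
    using s by (simp add: ac_simps)
  then have "gauss_c_var s (Complex u v) = normal_density 0 (sqrt (s/2)) u * normal_density 0 (sqrt (s/2)) v"
    for u v
    using s by (simp add: gauss_c_var_def normal_density_def cmod_power2 exp_add[symmetric]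
        real_sqrt_mult power_divide add_divide_distrib diff_divide_distrib)
  note product = integrable_complex_product[OF integrable_normal_density[OF s2] integrable_normal_density[OF s2]
      gauss_c_var_measurable this]
    integral_complex_product[OF integrable_normal_density[OF s2] integrable_normal_density[OF s2]
      gauss_c_var_measurable this]
  then show ?thesis
    by (simp add: has_bochner_integral_iff integral_normal_density[OF s2])
qed


lemma length_brgc [simp]: "length (brgc n) = 2 ^ n"
  by (induction n) simp_all

lemma set_brgc: "set (brgc n) = {w. length w = n}"
  by (induction n) (auto simp: length_Suc_conv)

lemma distinct_brgc: "distinct (brgc n)"
  by (induction n) (auto simp: distinct_map)

lemma length_brgc_nth: "i < 2 ^ n \<Longrightarrow> length (brgc n ! i) = n"
  using set_brgc[of n] nth_mem[of i "brgc n"] by auto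

lemma bij_betw_brgc_nth: "bij_betw ((!) (brgc n)) {..<2 ^ n} {w. length w = n}"
  using distinct_brgc set_brgc by (intro bij_betw_nth) auto

lemma bij_betw_qam_label: "bij_betw (qam_label n) (qam_idx n) {w. length w = n + n}"
proof -
  have "bij_betw (map_prod ((!) (brgc n)) ((!) (brgc n))) (qam_idx n)
      ({w::bool list. length w = n} \<times> {w. length w = n})"
    unfolding qam_idx_def by (intro bij_betw_map_prod bij_betw_brgc_nth)
  moreover have "bij_betw (\<lambda>(u, w). u @ w) ({w::bool list. length w = n} \<times> {w. length w = n})
      {w. length w = n + n}"
    by (rule bij_betwI[where g = "\<lambda>w. (take n w, drop n w)"]) auto
  ultimately show ?thesis
    by (auto dest: bij_betw_trans simp: qam_label_def[abs_def] comp_def case_prod_beta' map_prod_def)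
qed

lemma brgc_Suc_nth:
  assumes "i < 2 ^ Suc k"
  shows "brgc (Suc k) ! i =
    (if i < 2 ^ k then False # brgc k ! i else True # brgc k ! (2 ^ Suc k - 1 - i))"
proof (cases "i < 2 ^ k")
  case False
  then have "i - 2 ^ k < 2 ^ k" using assms by simp
  with False assms show ?thesis by (simp add: nth_append rev_nth mult_2)
qed (simp add: nth_append)

lemma brgc_nth_0: "brgc n ! 0 = replicate n False"
  by (induction n) (auto simp: nth_append)

declare brgc.simps(2) [simp del]

lemma brgc_nth_eq_replicate_iff: "i < 2 ^ n \<Longrightarrow> brgc n ! i = replicate n False \<longleftrightarrow> i = 0"
  using nth_eq_iff_index_eq[OF distinct_brgc[of n], of i 0] brgc_nth_0[of n] by auto

lemma brgc_tail_zero_iff: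
  assumes i: "i < 2 ^ Suc k"
  shows "(\<forall>j. 0 < j \<and> j < Suc k \<longrightarrow> \<not> brgc (Suc k) ! i ! j) \<longleftrightarrow> i = 0 \<or> i = 2 ^ Suc k - 1"
proof -
  define i' where "i' = (if i < 2 ^ k then i else 2 ^ Suc k - 1 - i)"
  have i': "i' < 2 ^ k" unfolding i'_def using i by auto
  have "(\<forall>j. 0 < j \<and> j < Suc k \<longrightarrow> \<not> brgc (Suc k) ! i ! j) \<longleftrightarrow> (\<forall>j<k. \<not> brgc k ! i' ! j)"
    unfolding brgc_Suc_nth[OF i] i'_def by (auto simp: less_Suc_eq_0_disj)
  also have "\<dots> \<longleftrightarrow> brgc k ! i' = replicate k False"
    using length_brgc_nth[OF i'] by (auto simp: list_eq_iff_nth_eq)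
  also have "\<dots> \<longleftrightarrow> i' = 0"
    by (rule brgc_nth_eq_replicate_iff[OF i'])
  also have "\<dots> \<longleftrightarrow> i = 0 \<or> i = 2 ^ Suc k - 1"
    unfolding i'_def using i by auto
  finally show ?thesis .
qed

lemma brgc_Suc_nth_head: "i < 2 ^ Suc k \<Longrightarrow> brgc (Suc k) ! i ! 0 \<longleftrightarrow> \<not> i < 2 ^ k"
  by (simp add: brgc_Suc_nth)

lemma sum_bool_partition:
  fixes F :: "'k \<Rightarrow> bool \<Rightarrow> 'a::comm_monoid_add"
  assumes "finite K"
  shows "(\<Sum>b\<in>UNIV. \<Sum>k\<in>{k\<in>K. lab k = b}. F k b) = (\<Sum>k\<in>K. F k (lab k))"
proof -
  have "(\<Sum>b\<in>UNIV. \<Sum>k\<in>{k\<in>K. lab k = b}. F k b) = (\<Sum>b\<in>UNIV. \<Sum>k\<in>K. if lab k = b then F k b else 0)"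
    using assms by (simp add: sum.inter_filter)
  also have "\<dots> = (\<Sum>k\<in>K. \<Sum>b\<in>UNIV. if lab k = b then F k b else 0)"
    by (rule sum.swap)
  finally show ?thesis by (simp add: UNIV_bool)
qed

lemma sum_words_prod:
  "(\<Sum>w\<in>{w::bool list. length w = m}. \<Prod>j<m. h j (w ! j)) = (\<Prod>j<m. h j False + (h j True :: real))"
proof (induction m arbitrary: h)
  case (Suc m)
  have words: "{w::bool list. length w = Suc m} = (\<lambda>(b, w). b # w) ` (UNIV \<times> {w. length w = m})"
    by (auto simp: length_Suc_conv image_iff)
  have inj: "inj_on (\<lambda>(b, w). b # w) (UNIV \<times> {w::bool list. length w = m})"
    by (auto simp: inj_on_def)
  have "(\<Sum>w\<in>{w::bool list. length w = Suc m}. \<Prod>j<Suc m. h j (w ! j))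
      = (\<Sum>b\<in>UNIV. \<Sum>w\<in>{w::bool list. length w = m}. h 0 b * (\<Prod>j<m. h (Suc j) (w ! j)))"
    unfolding words sum.reindex[OF inj] sum.cartesian_product
    by (simp del: prod.lessThan_Suc add: prod.lessThan_Suc_shift case_prod_beta')
  also have "\<dots> = (\<Sum>b\<in>UNIV. h 0 b * (\<Prod>j<m. h (Suc j) False + h (Suc j) True))"
    by (simp add: sum_distrib_left[symmetric] Suc.IH[of "\<lambda>j. h (Suc j)"])
  also have "\<dots> = (\<Prod>j<Suc m. h j False + h j True)"
    by (simp del: prod.lessThan_Suc add: prod.lessThan_Suc_shift UNIV_bool algebra_simps)
  finally show ?case .
qed simp

lemma sum_words_prod_marginal:
  fixes h :: "nat \<Rightarrow> bool \<Rightarrow> real"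
  assumes j: "j < m" and h: "\<And>i. h i False + h i True = 1"
  shows "(\<Sum>w\<in>{w::bool list. length w = m}. if w ! j = b then \<Prod>i<m. h i (w ! i) else 0) = h j b"
proof -
  define h' where "h' i c = (if i = j \<and> c \<noteq> b then 0 else h i c)" for i c
  have "(if w ! j = b then \<Prod>i<m. h i (w ! i) else 0) = (\<Prod>i<m. h' i (w ! i))" for w :: "bool list"
    using j by (auto simp: h'_def intro!: prod.cong prod_zero[symmetric] bexI[of _ j])
  then have "(\<Sum>w\<in>{w::bool list. length w = m}. if w ! j = b then \<Prod>i<m. h i (w ! i) else 0)
      = (\<Prod>i<m. h' i False + h' i True)"
    by (simp add: sum_words_prod)
  also have "\<dots> = (\<Prod>i<m. if i = j then h j b else 1)"
    using h by (intro prod.cong) (auto simp: h'_def)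
  finally show ?thesis using j by simp
qed


section \<open>Bitwise versus symbolwise information\<close>

lemma diff_le_mult_ln_div:
  fixes e r :: real
  assumes "0 \<le> e" "0 \<le> r" "e = 0 \<or> 0 < r"
  shows "e - r \<le> e * ln (e / r)"
proof (cases "e = 0")
  case False
  with assms have e: "0 < e" and r: "0 < r" by auto
  have "e * ln (r / e) \<le> e * (r / e - 1)"
    using e r by (intro mult_left_mono ln_le_minus_one) auto
  also have "\<dots> = r - e" using e by (simp add: field_simps)
  finally show ?thesis using e r by (simp add: ln_div algebra_simps)
qed (use assms in simp)

text \<open>The contribution of a single symbol, with prior \<open>P\<close> and likelihood \<open>g\<close>, to the
  bitwise informations; \<open>J j\<close> is the joint density of bit \<open>j\<close> and \<open>p\<close> the output density.\<close>
lemma symbol_term_le: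
  fixes Q J :: "nat \<Rightarrow> bool \<Rightarrow> real" and w :: "bool list" and m :: nat
  defines "P \<equiv> \<Prod>j<m. Q j (w ! j)"
  assumes Q: "\<And>j b. 0 \<le> Q j b" and J: "\<And>j b. 0 \<le> J j b" and g: "0 < g" and p: "0 < p"
    and J_ge: "\<And>j. P * g \<le> J j (w ! j)"
  shows "P * g * (\<Sum>j<m. ln (J j (w ! j) / (Q j (w ! j) * p)))
           \<le> P * g * (ln g - ln p) + p * (\<Prod>j<m. J j (w ! j) / p) - P * g"
proof -
  define R where "R = (\<Prod>j<m. J j (w ! j) / p)"
  have R: "0 \<le> R" unfolding R_def using J p by (simp add: prod_nonneg)
  show ?thesis
  proof (cases "P = 0")
    case True
    then show ?thesis using R p by (simp add: R_def)
  next
    case False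
    then have Qpos: "0 < Q j (w ! j)" if "j < m" for j
      using Q[of j "w ! j"] that by (force simp: P_def)
    then have P_pos: "0 < P" unfolding P_def by (intro prod_pos) simp
    have Jpos: "0 < J j (w ! j)" for j using J_ge[of j] mult_pos_pos[OF P_pos g] by linarith
    have R_pos: "0 < R" unfolding R_def using Jpos p by (simp add: prod_pos)
    have "(\<Sum>j<m. ln (J j (w ! j) / (Q j (w ! j) * p)))
        = (\<Sum>j<m. ln (J j (w ! j) / p) - ln (Q j (w ! j)))"
    proof (intro sum.cong refl)
      fix j assume "j \<in> {..<m}"
      then show "ln (J j (w ! j) / (Q j (w ! j) * p)) = ln (J j (w ! j) / p) - ln (Q j (w ! j))"
        using Jpos[of j] Qpos[of j] p by (simp add: ln_div ln_mult)
    qed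
    also have "\<dots> = (\<Sum>j<m. ln (J j (w ! j) / p)) - (\<Sum>j<m. ln (Q j (w ! j)))"
      by (rule sum_subtractf)
    also have "\<dots> = ln R - ln P"
      unfolding R_def P_def using Jpos Qpos p
      by (subst (1 2) ln_prod) (auto simp: less_imp_neq[symmetric])
    finally have sum_ln: "(\<Sum>j<m. ln (J j (w ! j) / (Q j (w ! j) * p))) = ln R - ln P" .
    have "P * g * ln (P * g / (p * R)) = P * g * (ln g - ln p) - P * g * (ln R - ln P)"
      using P_pos g p R_pos by (simp add: ln_div ln_mult algebra_simps)
    moreover have "P * g - p * R \<le> P * g * ln (P * g / (p * R))"
      using P_pos g p R_pos by (intro diff_le_mult_ln_div) auto
    ultimately show ?thesis unfolding sum_ln R_def[symmetric] by linarith
  qed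
qed

text \<open>Pointwise form of \<open>\<Sum>\<^sub>j I(B\<^sub>j; Y) \<le> I(X; Y)\<close> for independent label bits.\<close>
lemma sum_bit_info_le_symbol_info:
  fixes K :: "'k set" and lab :: "'k \<Rightarrow> bool list" and Q :: "nat \<Rightarrow> bool \<Rightarrow> real"
    and g :: "'k \<Rightarrow> real"
  assumes K: "finite K" and lab: "bij_betw lab K {w. length w = m}"
    and Q: "\<And>j b. 0 \<le> Q j b" and Q_sum: "\<And>j. Q j False + Q j True = 1"
    and g: "\<And>k. k \<in> K \<Longrightarrow> 0 < g k"
  defines "P \<equiv> \<lambda>k. \<Prod>j<m. Q j (lab k ! j)"
  defines "p \<equiv> \<Sum>k\<in>K. P k * g k"
  defines "J \<equiv> \<lambda>j b. \<Sum>k\<in>{k\<in>K. lab k ! j = b}. P k * g k"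
  shows "(\<Sum>j<m. \<Sum>b\<in>UNIV. J j b * ln (J j b / (Q j b * p)))
           \<le> (\<Sum>k\<in>K. P k * g k * ln (g k)) - p * ln p"
proof -
  have P: "0 \<le> P k" for k unfolding P_def using Q by (simp add: prod_nonneg)
  have Pg: "k \<in> K \<Longrightarrow> 0 \<le> P k * g k" for k using P g by (simp add: less_imp_le)
  have sum_lab: "(\<Sum>k\<in>K. G (lab k)) = (\<Sum>w\<in>{w. length w = m}. G w)" for G :: "bool list \<Rightarrow> real"
    using sum.reindex_bij_betw[OF lab, of G] by simp
  have "(\<Sum>k\<in>K. P k) = 1"
    unfolding P_def sum_lab[of "\<lambda>w. \<Prod>j<m. Q j (w ! j)"] sum_words_prod by (simp add: Q_sum)
  then obtain k where "k \<in> K" "0 < P k" using P by (metis less_eq_real_def sum.neutral zero_neq_one)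
  then have p_pos: "0 < p"
    unfolding p_def using K Pg g by (intro sum_pos2[of _ k]) auto
  have J: "0 \<le> J j b" for j b unfolding J_def using Pg by (intro sum_nonneg) auto
  have J_ge: "P k * g k \<le> J j (lab k ! j)" if "k \<in> K" for k j
    unfolding J_def using K Pg that by (intro member_le_sum) auto
  have J_sum: "J j False + J j True = p" for j
    unfolding J_def p_def using sum_bool_partition[OF K, where lab = "\<lambda>k. lab k ! j" and F = "\<lambda>k b. P k * g k"]
    by (simp add: UNIV_bool)
  have "(\<Sum>k\<in>K. \<Prod>j<m. J j (lab k ! j) / p) = (\<Prod>j<m. J j False / p + J j True / p)"
    using sum_lab[of "\<lambda>w. \<Prod>j<m. J j (w ! j) / p"] sum_words_prod by simp
  also have "\<dots> = 1"
    using J_sum p_pos by (simp add: add_divide_distrib[symmetric])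
  finally have R_sum: "(\<Sum>k\<in>K. \<Prod>j<m. J j (lab k ! j) / p) = 1" .
  have "(\<Sum>j<m. \<Sum>b\<in>UNIV. J j b * ln (J j b / (Q j b * p)))
      = (\<Sum>j<m. \<Sum>k\<in>K. P k * g k * ln (J j (lab k ! j) / (Q j (lab k ! j) * p)))"
    unfolding J_def sum_distrib_right
    by (intro sum.cong refl sum_bool_partition[OF K, where lab = "\<lambda>k. lab k ! _"])
  also have "\<dots> = (\<Sum>k\<in>K. P k * g k * (\<Sum>j<m. ln (J j (lab k ! j) / (Q j (lab k ! j) * p))))"
    by (subst sum.swap) (simp add: sum_distrib_left)
  also have "\<dots> \<le> (\<Sum>k\<in>K. P k * g k * (ln (g k) - ln p) + p * (\<Prod>j<m. J j (lab k ! j) / p) - P k * g k)"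
    unfolding P_def using Q J g p_pos J_ge
    by (intro sum_mono symbol_term_le) (auto simp: P_def)
  also have "\<dots> = (\<Sum>k\<in>K. P k * g k * ln (g k)) - p * ln p"
    by (simp add: sum.distrib sum_subtractf sum_distrib_left[symmetric] sum_distrib_right[symmetric]
        R_sum p_def[symmetric] right_diff_distrib)
  finally show ?thesis .
qed


text \<open>Beyond the label length the bit law is a point mass at \<open>False\<close>, so that it is a
  probability for every \<open>j\<close>.\<close>
definition bit_law :: "nat \<Rightarrow> (nat \<Rightarrow> real) \<Rightarrow> nat \<Rightarrow> bool \<Rightarrow> real" where
  "bit_law m p j b = (if j < m then (if b then p j else 1 - p j) else (if b then 0 else 1))"

definition signal_point :: "nat \<Rightarrow> (nat \<Rightarrow> real) \<Rightarrow> real \<Rightarrow> nat \<times> nat \<Rightarrow> complex" where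
  "signal_point m p snr k = of_real (sqrt snr) * norm_point m p k"

definition bit_mi_integrand :: "nat \<Rightarrow> (nat \<Rightarrow> real) \<Rightarrow> real \<Rightarrow> nat \<Rightarrow> bool \<Rightarrow> complex \<Rightarrow> real" where
  "bit_mi_integrand m p snr j b y = joint_dens m p snr j b y *
     ln (joint_dens m p snr j b y / (bit_prob m p j b * out_dens m p snr y))"

lemma bit_mi_eq: "bit_mi m p snr j = (\<Sum>b\<in>UNIV. integral\<^sup>L lborel (bit_mi_integrand m p snr j b))"
  unfolding bit_mi_def bit_mi_integrand_def ..

lemma bit_law_nonneg: "shaping_ok m p \<Longrightarrow> 0 \<le> bit_law m p j b"
  by (auto simp: bit_law_def shaping_ok_def)

lemma bit_law_sum: "bit_law m p j False + bit_law m p j True = 1"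
  by (simp add: bit_law_def)

lemma sym_prob_eq_prod_bit_law: "sym_prob m p k = (\<Prod>j<m. bit_law m p j (qam_label (m div 2) k ! j))"
  unfolding sym_prob_def by (intro prod.cong) (auto simp: bit_law_def)

lemma finite_qam_idx [simp]: "finite (qam_idx n)"
  by (simp add: qam_idx_def)

lemma bij_betw_qam_label_words:
  "even m \<Longrightarrow> bij_betw (qam_label (m div 2)) (qam_idx (m div 2)) {w. length w = m}"
  using bij_betw_qam_label[of "m div 2"] by (metis add_self_div_2 evenE mult_2)

lemma sym_prob_nonneg: "shaping_ok m p \<Longrightarrow> 0 \<le> sym_prob m p k"
  unfolding sym_prob_eq_prod_bit_law by (intro prod_nonneg) (auto intro: bit_law_nonneg)

lemma sum_sym_prob: "even m \<Longrightarrow> (\<Sum>k\<in>qam_idx (m div 2). sym_prob m p k) = 1"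
  unfolding sym_prob_eq_prod_bit_law
  by (simp add: sum.reindex_bij_betw[OF bij_betw_qam_label_words, where g = "\<lambda>w. \<Prod>j<m. bit_law m p j (w ! j)"]
      sum_words_prod bit_law_sum)

lemma bit_prob_eq_bit_law:
  assumes "even m" "j < m"
  shows "bit_prob m p j b = bit_law m p j b"
proof -
  have "bit_prob m p j b =
      (\<Sum>k\<in>qam_idx (m div 2). if qam_label (m div 2) k ! j = b then sym_prob m p k else 0)"
    unfolding bit_prob_def by (simp add: sum.inter_filter)
  also have "\<dots> = (\<Sum>w\<in>{w. length w = m}. if w ! j = b then \<Prod>i<m. bit_law m p i (w ! i) else 0)"
    unfolding sym_prob_eq_prod_bit_law
    by (rule sum.reindex_bij_betw[OF bij_betw_qam_label_words[OF assms(1)],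
          where g = "\<lambda>w. if w ! j = b then \<Prod>i<m. bit_law m p i (w ! i) else 0"])
  also have "\<dots> = bit_law m p j b"
    by (rule sum_words_prod_marginal[OF assms(2) bit_law_sum])
  finally show ?thesis .
qed

lemma sum_sym_prob_norm_point:
  assumes "shaping_ok m p"
  shows "(\<Sum>k\<in>qam_idx (m div 2). sym_prob m p k * (cmod (norm_point m p k))\<^sup>2) = 1"
proof -
  have V: "0 < sym_var m p" using assms by (simp add: shaping_ok_def)
  then show ?thesis
    unfolding norm_point_def
    by (simp add: sum_divide_distrib[symmetric] norm_divide power_divide sym_var_def[symmetric])
qed

lemma out_dens_eq: "out_dens m p snr y =
    (\<Sum>k\<in>qam_idx (m div 2). sym_prob m p k * gauss_c (y - signal_point m p snr k))"
  unfolding out_dens_def signal_point_def ..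

lemma joint_dens_eq: "joint_dens m p snr j b y =
    (\<Sum>k\<in>{k\<in>qam_idx (m div 2). qam_label (m div 2) k ! j = b}.
       sym_prob m p k * gauss_c (y - signal_point m p snr k))"
  unfolding joint_dens_def signal_point_def ..

lemma mixture_term_nonneg:
  "shaping_ok m p \<Longrightarrow> 0 \<le> sym_prob m p k * gauss_c (y - signal_point m p snr k)"
  using sym_prob_nonneg gauss_c_pos by (simp add: less_imp_le)

lemma out_dens_pos:
  assumes "even m" "shaping_ok m p"
  shows "0 < out_dens m p snr y"
proof -
  obtain k where k: "k \<in> qam_idx (m div 2)" "sym_prob m p k \<noteq> 0"
    using sum_sym_prob[OF assms(1), of p] by (metis sum.neutral zero_neq_one)
  then have "0 < sym_prob m p k * gauss_c (y - signal_point m p snr k)"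
    using sym_prob_nonneg[OF assms(2), of k] gauss_c_pos by simp
  with k show ?thesis
    unfolding out_dens_eq using mixture_term_nonneg[OF assms(2)] by (intro sum_pos2[of _ k]) auto
qed

lemma joint_dens_bounds:
  assumes "shaping_ok m p"
  shows "0 \<le> joint_dens m p snr j b y" "joint_dens m p snr j b y \<le> out_dens m p snr y"
  unfolding joint_dens_eq out_dens_eq using mixture_term_nonneg[OF assms]
  by (auto intro!: sum_nonneg sum_mono2)

lemma joint_dens_True_plus_False:
  "joint_dens m p snr j True y + joint_dens m p snr j False y = out_dens m p snr y"
  using sum_bool_partition[where K = "qam_idx (m div 2)" and lab = "\<lambda>k. qam_label (m div 2) k ! j"
      and F = "\<lambda>k b. sym_prob m p k * gauss_c (y - signal_point m p snr k)"]
  by (simp add: joint_dens_eq out_dens_eq UNIV_bool add.commute)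

lemma joint_dens_measurable [measurable]: "joint_dens m p snr j b \<in> borel_measurable borel"
  unfolding joint_dens_def[abs_def] by measurable

lemma out_dens_measurable [measurable]: "out_dens m p snr \<in> borel_measurable borel"
  unfolding out_dens_def[abs_def] by measurable

lemma bit_mi_integrand_measurable [measurable]: "bit_mi_integrand m p snr j b \<in> borel_measurable borel"
  unfolding bit_mi_integrand_def[abs_def] by measurable

lemma integrable_out_dens: "integrable lborel (out_dens m p snr)"
  unfolding out_dens_eq[abs_def]
  using has_bochner_integral_gauss_c(1) by (auto simp: has_bochner_integral_iff)

lemma bit_prob_pos:
  assumes ok: "shaping_ok m p" and J: "joint_dens m p snr j b y \<noteq> 0"
  shows "0 < bit_prob m p j b"
proof -
  have "bit_prob m p j b \<noteq> 0"
  proof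
    assume "bit_prob m p j b = 0"
    then have "\<forall>k\<in>{k\<in>qam_idx (m div 2). qam_label (m div 2) k ! j = b}. sym_prob m p k = 0"
      unfolding bit_prob_def using sym_prob_nonneg[OF ok] by (subst (asm) sum_nonneg_eq_0_iff) auto
    with J show False unfolding joint_dens_eq by (simp add: sum.neutral)
  qed
  moreover have "0 \<le> bit_prob m p j b"
    unfolding bit_prob_def using sym_prob_nonneg[OF ok] by (intro sum_nonneg)
  ultimately show ?thesis by simp
qed

text \<open>The joint density is at most the output density, and \<open>x - 1 \<le> x ln x\<close>.\<close>
lemma abs_bit_mi_integrand_le:
  assumes ev: "even m" and ok: "shaping_ok m p"
  shows "\<bar>bit_mi_integrand m p snr j b y\<bar> \<le> (1 + \<bar>ln (bit_prob m p j b)\<bar>) * out_dens m p snr y"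
proof -
  define J where "J = joint_dens m p snr j b y"
  define B where "B = bit_prob m p j b"
  define D where "D = out_dens m p snr y"
  have J: "0 \<le> J" "J \<le> D" unfolding J_def D_def using joint_dens_bounds[OF ok] by auto
  have D: "0 < D" unfolding D_def by (rule out_dens_pos[OF ev ok])
  show ?thesis
  proof (cases "J = 0")
    case True
    then show ?thesis using D unfolding bit_mi_integrand_def J_def[symmetric] D_def[symmetric] by simp
  next
    case False
    with J have J_pos: "0 < J" by simp
    have B_pos: "0 < B"
      unfolding B_def using bit_prob_pos[OF ok, of snr j b y] J_pos by (simp add: J_def)
    have "bit_mi_integrand m p snr j b y = J * ln (J / D) - J * ln B"
      unfolding bit_mi_integrand_def J_def[symmetric] B_def[symmetric] D_def[symmetric]
      using J_pos B_pos D by (simp add: ln_div ln_mult algebra_simps)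
    moreover have "J - D \<le> J * ln (J / D)"
      using J D by (intro diff_le_mult_ln_div) auto
    moreover have "J * ln (J / D) \<le> 0"
      using J_pos J D by (intro mult_nonneg_nonpos) auto
    moreover have "\<bar>J * ln B\<bar> \<le> D * \<bar>ln B\<bar>"
      using J by (simp add: abs_mult mult_right_mono)
    ultimately show ?thesis unfolding B_def D_def using J by (simp add: algebra_simps abs_le_iff)
  qed
qed

lemma integrable_bit_mi_integrand:
  assumes "even m" "shaping_ok m p"
  shows "integrable lborel (bit_mi_integrand m p snr j b)"
proof (rule Bochner_Integration.integrable_bound)
  show "integrable lborel (\<lambda>y. (1 + \<bar>ln (bit_prob m p j b)\<bar>) * out_dens m p snr y)"
    using integrable_out_dens by (rule integrable_mult_right)
  show "AE y in lborel. norm (bit_mi_integrand m p snr j b y)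
      \<le> norm ((1 + \<bar>ln (bit_prob m p j b)\<bar>) * out_dens m p snr y)"
    using abs_bit_mi_integrand_le[OF assms] out_dens_pos[OF assms] by (auto simp: abs_mult less_imp_le)
qed simp


section \<open>The upper bound \<open>ln (1 + snr)\<close>\<close>

lemma ln_gauss_c_minus_ln_gauss_c_var:
  "0 < s \<Longrightarrow> ln (gauss_c z) - ln (gauss_c_var s y) = (cmod y)\<^sup>2 / s - (cmod z)\<^sup>2 + ln s"
  by (simp add: gauss_c_def gauss_c_var_def ln_div ln_mult)

text \<open>Pointwise majorant of the bitwise information densities: the symbol information density
  with the output entropy bounded through the Gaussian of variance \<open>1 + snr\<close>.\<close>
definition info_majorant :: "nat \<Rightarrow> (nat \<Rightarrow> real) \<Rightarrow> real \<Rightarrow> complex \<Rightarrow> real" where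
  "info_majorant m p snr y =
     (\<Sum>k\<in>qam_idx (m div 2). sym_prob m p k * gauss_c (y - signal_point m p snr k) *
        ((cmod y)\<^sup>2 / (1 + snr) - (cmod (y - signal_point m p snr k))\<^sup>2 + ln (1 + snr) - 1))
     + gauss_c_var (1 + snr) y"

lemma sum_bit_mi_integrand_le_info_majorant:
  assumes ev: "even m" and ok: "shaping_ok m p" and snr: "0 \<le> snr"
  shows "(\<Sum>j<m. \<Sum>b\<in>UNIV. bit_mi_integrand m p snr j b y) \<le> info_majorant m p snr y"
proof -
  let ?K = "qam_idx (m div 2)" and ?s = "1 + snr"
  define g where "g k = gauss_c (y - signal_point m p snr k)" for k
  define D where "D = out_dens m p snr y"
  define q where "q = gauss_c_var ?s y"
  have D: "0 < D" unfolding D_def by (rule out_dens_pos[OF ev ok])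
  have q: "0 < q" unfolding q_def gauss_c_var_def using snr by simp
  have "(\<Sum>j<m. \<Sum>b\<in>UNIV. bit_mi_integrand m p snr j b y)
      = (\<Sum>j<m. \<Sum>b\<in>UNIV. joint_dens m p snr j b y *
           ln (joint_dens m p snr j b y / (bit_law m p j b * D)))"
    unfolding bit_mi_integrand_def D_def by (intro sum.cong refl) (simp add: bit_prob_eq_bit_law[OF ev])
  also have "\<dots> \<le> (\<Sum>k\<in>?K. sym_prob m p k * g k * ln (g k)) - D * ln D"
    using sum_bit_info_le_symbol_info[where lab = "qam_label (m div 2)" and Q = "bit_law m p" and g = g,
        OF finite_qam_idx bij_betw_qam_label_words[OF ev] bit_law_nonneg[OF ok] bit_law_sum]
    unfolding sym_prob_eq_prod_bit_law[symmetric] joint_dens_eq out_dens_eq D_def g_def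
    by (simp add: gauss_c_pos)
  also have "\<dots> \<le> (\<Sum>k\<in>?K. sym_prob m p k * g k * ln (g k)) - D * ln q - D + q"
    using diff_le_mult_ln_div[of D q] D q by (simp add: ln_div algebra_simps)
  also have "\<dots> = (\<Sum>k\<in>?K. sym_prob m p k * g k * (ln (g k) - ln q - 1)) + q"
    unfolding D_def out_dens_eq g_def[symmetric]
    by (simp add: sum_distrib_right[symmetric] sum_subtractf right_diff_distrib)
  also have "\<dots> = info_majorant m p snr y"
    unfolding info_majorant_def q_def g_def using snr
    by (simp add: ln_gauss_c_minus_ln_gauss_c_var diff_diff_eq2)
  finally show ?thesis .
qed

lemma has_bochner_integral_info_majorant:
  assumes ev: "even m" and ok: "shaping_ok m p" and snr: "0 \<le> snr"
  shows "has_bochner_integral lborel (info_majorant m p snr) (ln (1 + snr))"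
proof -
  let ?K = "qam_idx (m div 2)" and ?s = "1 + snr"
  have s: "0 < ?s" using snr by simp
  have gauss_term: "has_bochner_integral lborel
      (\<lambda>y. gauss_c (y - c) * ((cmod y)\<^sup>2 / ?s - (cmod (y - c))\<^sup>2 + ln ?s - 1))
      ((1 + (cmod c)\<^sup>2) / ?s - 1 + ln ?s - 1)" for c
  proof -
    have "has_bochner_integral lborel
        (\<lambda>y. gauss_c (y - c) * (cmod y)\<^sup>2 / ?s - gauss_c (y - c) * (cmod (y - c))\<^sup>2
           + gauss_c (y - c) * (ln ?s - 1))
        ((1 + (cmod c)\<^sup>2) / ?s - 1 + 1 * (ln ?s - 1))"
      by (intro has_bochner_integral_add has_bochner_integral_diff has_bochner_integral_divide_zero
          has_bochner_integral_mult_left has_bochner_integral_gauss_c)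
    then show ?thesis by (simp add: algebra_simps)
  qed
  have norm_signal: "(cmod (signal_point m p snr k))\<^sup>2 = snr * (cmod (norm_point m p k))\<^sup>2" for k
    using snr by (simp add: signal_point_def norm_mult power_mult_distrib)
  have "has_bochner_integral lborel (info_majorant m p snr)
     ((\<Sum>k\<in>?K. sym_prob m p k * ((1 + (cmod (signal_point m p snr k))\<^sup>2) / ?s - 1 + ln ?s - 1)) + 1)"
    unfolding info_majorant_def[abs_def] mult.assoc
    by (intro has_bochner_integral_add has_bochner_integral_sum has_bochner_integral_mult_right gauss_term
        has_bochner_integral_gauss_c_var s)
  moreover have "(\<Sum>k\<in>?K. sym_prob m p k * ((1 + (cmod (signal_point m p snr k))\<^sup>2) / ?s - 1 + ln ?s - 1))
      = (\<Sum>k\<in>?K. sym_prob m p k) / ?s + snr / ?s * (\<Sum>k\<in>?K. sym_prob m p k * (cmod (norm_point m p k))\<^sup>2)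
        + (ln ?s - 2) * (\<Sum>k\<in>?K. sym_prob m p k)"
  proof -
    have "P * ((1 + snr * N) / S - 1 + L - 1) = P / S + snr / S * (P * N) + (L - 2) * P"
      for P N S L :: real
      by (simp add: add_divide_distrib algebra_simps)
    then have "sym_prob m p k * ((1 + (cmod (signal_point m p snr k))\<^sup>2) / ?s - 1 + ln ?s - 1)
        = sym_prob m p k / ?s + snr / ?s * (sym_prob m p k * (cmod (norm_point m p k))\<^sup>2)
          + (ln ?s - 2) * sym_prob m p k" for k
      unfolding norm_signal .
    then show ?thesis by (simp add: sum.distrib sum_distrib_left sum_divide_distrib)
  qed
  ultimately have "has_bochner_integral lborel (info_majorant m p snr) (1 / ?s + snr / ?s + (ln ?s - 2) + 1)"
    by (simp add: sum_sym_prob[OF ev] sum_sym_prob_norm_point[OF ok])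
  moreover have "1 / ?s + snr / ?s + (ln ?s - 2) + 1 = ln ?s"
    using s by (simp add: add_divide_distrib[symmetric])
  ultimately show ?thesis by simp
qed

lemma sum_bit_mi_le_ln:
  assumes ev: "even m" and ok: "shaping_ok m p" and snr: "0 \<le> snr"
  shows "(\<Sum>j<m. bit_mi m p snr j) \<le> ln (1 + snr)"
proof -
  note integrable = integrable_bit_mi_integrand[OF ev ok]
  note majorant = has_bochner_integral_info_majorant[OF ev ok snr]
  have "(\<Sum>j<m. bit_mi m p snr j) = (\<integral>y. (\<Sum>j<m. \<Sum>b\<in>UNIV. bit_mi_integrand m p snr j b y) \<partial>lborel)"
    unfolding bit_mi_eq using integrable by (simp add: Bochner_Integration.integral_sum)
  also have "\<dots> \<le> integral\<^sup>L lborel (info_majorant m p snr)"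
    using integrable majorant
    by (intro Bochner_Integration.integral_mono sum_bit_mi_integrand_le_info_majorant[OF ev ok snr])
      (auto simp: has_bochner_integral_iff)
  also have "\<dots> = ln (1 + snr)"
    using majorant by (simp add: has_bochner_integral_iff)
  finally show ?thesis .
qed


lemma tanh_le_self: "0 \<le> t \<Longrightarrow> tanh t \<le> (t::real)"
proof -
  assume t: "0 \<le> t"
  have "(\<lambda>x. x - tanh x) 0 \<le> (\<lambda>x. x - tanh x) t"
  proof (rule DERIV_nonneg_imp_nondecreasing[OF t])
    fix x :: real
    show "\<exists>y. ((\<lambda>x. x - tanh x) has_field_derivative y) (at x) \<and> 0 \<le> y"
      by (intro exI[of _ "(tanh x)\<^sup>2"] conjI)
        (auto intro!: derivative_eq_intros)
  qed
  then show ?thesis by simp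
qed

lemma tanh_ge_cubic: "0 \<le> t \<Longrightarrow> t - t ^ 3 / 3 \<le> tanh (t::real)"
proof -
  assume t: "0 \<le> t"
  have "(\<lambda>x. tanh x - x + x ^ 3 / 3) 0 \<le> (\<lambda>x. tanh x - x + x ^ 3 / 3) t"
  proof (rule DERIV_nonneg_imp_nondecreasing[OF t])
    fix x :: real assume x: "0 \<le> x"
    have "(tanh x)\<^sup>2 \<le> x\<^sup>2" using tanh_le_self[OF x] x by (intro power_mono) auto
    then show "\<exists>y. ((\<lambda>x. tanh x - x + x ^ 3 / 3) has_field_derivative y) (at x) \<and> 0 \<le> y"
      by (intro exI[of _ "x\<^sup>2 - (tanh x)\<^sup>2"] conjI)
        (auto intro!: derivative_eq_intros simp: power2_eq_square)
  qed
  then show ?thesis by simp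
qed

lemma tanh_le_quintic: "0 \<le> t \<Longrightarrow> tanh (t::real) \<le> t - t ^ 3 / 3 + 2 * t ^ 5 / 15"
proof -
  assume t: "0 \<le> t"
  have "(\<lambda>x. x - x ^ 3 / 3 + 2 * x ^ 5 / 15 - tanh x) 0 \<le> (\<lambda>x. x - x ^ 3 / 3 + 2 * x ^ 5 / 15 - tanh x) t"
  proof (rule DERIV_nonneg_imp_nondecreasing[OF t])
    fix x :: real assume x: "0 \<le> x"
    have key: "x\<^sup>2 - 2 * x ^ 4 / 3 \<le> (tanh x)\<^sup>2"
    proof (cases "0 \<le> x - x ^ 3 / 3")
      case True
      then have "(x - x ^ 3 / 3)\<^sup>2 \<le> (tanh x)\<^sup>2"
        using tanh_ge_cubic[OF x] by (intro power_mono) auto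
      moreover have "(x - x ^ 3 / 3)\<^sup>2 = x\<^sup>2 - 2 * x ^ 4 / 3 + x ^ 6 / 9"
        by (simp add: power2_eq_square algebra_simps eval_nat_numeral)
      moreover have "0 \<le> x ^ 6 / 9" by simp
      ultimately show ?thesis by linarith
    next
      case False
      then have "3 \<le> x\<^sup>2"
        using x by (cases "x = 0") (auto simp: power3_eq_cube power2_eq_square)
      then have "0 \<le> x\<^sup>2 * (2 * x\<^sup>2 / 3 - 1)" by (intro mult_nonneg_nonneg) auto
      also have "\<dots> = - (x\<^sup>2 - 2 * x ^ 4 / 3)" by (simp add: algebra_simps flip: power_add)
      finally have "x\<^sup>2 - 2 * x ^ 4 / 3 \<le> 0" by simp
      then show ?thesis using zero_le_power2[of "tanh x"] by linarith
    qed
    show "\<exists>y. ((\<lambda>x. x - x ^ 3 / 3 + 2 * x ^ 5 / 15 - tanh x) has_field_derivative y) (at x) \<and> 0 \<le> y"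
      apply (intro exI[of _ "(tanh x)\<^sup>2 - x\<^sup>2 + 2 * x ^ 4 / 3"] conjI)
       apply (auto intro!: derivative_eq_intros)
      using key by (simp_all add: algebra_simps eval_nat_numeral)
  qed
  then show ?thesis by simp
qed

lemma ln_cosh_le: "ln (cosh t) \<le> t\<^sup>2 / 2 - t ^ 4 / 12 + t ^ 6 / 45" for t :: real
proof -
  have nonneg: "ln (cosh t) \<le> t\<^sup>2 / 2 - t ^ 4 / 12 + t ^ 6 / 45" if t: "0 \<le> t" for t :: real
  proof -
    have "(\<lambda>x. x\<^sup>2 / 2 - x ^ 4 / 12 + x ^ 6 / 45 - ln (cosh x)) 0
        \<le> (\<lambda>x. x\<^sup>2 / 2 - x ^ 4 / 12 + x ^ 6 / 45 - ln (cosh x)) t"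
    proof (rule DERIV_nonneg_imp_nondecreasing[OF t])
      fix x :: real assume x: "0 \<le> x"
      have c: "0 < cosh x" by (rule cosh_real_pos)
      show "\<exists>y. ((\<lambda>x. x\<^sup>2 / 2 - x ^ 4 / 12 + x ^ 6 / 45 - ln (cosh x)) has_field_derivative y) (at x)
          \<and> 0 \<le> y"
        apply (intro exI[of _ "x - x ^ 3 / 3 + 2 * x ^ 5 / 15 - tanh x"] conjI)
         apply (auto intro!: derivative_eq_intros simp: c tanh_def)
        using tanh_le_quintic[OF x] c by (simp_all add: algebra_simps eval_nat_numeral tanh_def field_simps)
    qed
    then show ?thesis by simp
  qed
  show ?thesis
  proof (cases "0 \<le> t")
    case False
    then show ?thesis using nonneg[of "- t"] by simp
  qed (rule nonneg)
qed


section \<open>Binary antipodal signalling\<close>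

definition bpsk_lb :: "real \<Rightarrow> real" where
  "bpsk_lb t = t - (t\<^sup>2 / 2 - t ^ 4 / 12 + t ^ 6 / 45)"

definition bpsk_lb_mean :: "real \<Rightarrow> real" where
  "bpsk_lb_mean r = r\<^sup>2 - r ^ 4 + 4/3 * r ^ 6 - 44/3 * r ^ 8 - 32/3 * r ^ 10 - 64/45 * r ^ 12"

text \<open>Information density of an equiprobable bit sent as \<open>\<plusminus>a\<close> through a unit Gaussian,
  bounded through \<open>ln cosh\<close>; \<open>H\<close> collects the factors common to both hypotheses.\<close>
lemma bpsk_info_density_ge:
  fixes H u a :: real
  assumes H: "0 < H"
  defines "J\<^sub>1 \<equiv> H * exp (- (u - a)\<^sup>2)" and "J\<^sub>0 \<equiv> H * exp (- (u + a)\<^sup>2)"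
  shows "J\<^sub>1 * bpsk_lb (2 * a * u) + J\<^sub>0 * bpsk_lb (- 2 * a * u)
    \<le> J\<^sub>1 * ln (J\<^sub>1 / (1/2 * (J\<^sub>1 + J\<^sub>0))) + J\<^sub>0 * ln (J\<^sub>0 / (1/2 * (J\<^sub>1 + J\<^sub>0)))"
proof -
  define t where "t = 2 * a * u"
  define E where "E = H * exp (- (u\<^sup>2 + a\<^sup>2))"
  have E: "0 < E" unfolding E_def using H by simp
  have J\<^sub>1: "J\<^sub>1 = E * exp t" and J\<^sub>0: "J\<^sub>0 = E * exp (- t)"
    unfolding J\<^sub>1_def J\<^sub>0_def E_def t_def mult.assoc exp_add[symmetric]
    by (simp_all add: power2_eq_square algebra_simps)
  have mid: "1/2 * (J\<^sub>1 + J\<^sub>0) = E * cosh t"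
    unfolding J\<^sub>1 J\<^sub>0 cosh_field_def by (simp add: algebra_simps)
  have "J\<^sub>1 * ln (J\<^sub>1 / (1/2 * (J\<^sub>1 + J\<^sub>0))) + J\<^sub>0 * ln (J\<^sub>0 / (1/2 * (J\<^sub>1 + J\<^sub>0)))
      = J\<^sub>1 * (t - ln (cosh t)) + J\<^sub>0 * (- t - ln (cosh t))"
    unfolding mid using E cosh_real_pos[of t] by (simp add: J\<^sub>1 J\<^sub>0 ln_div ln_mult)
  moreover have "J\<^sub>1 * bpsk_lb t \<le> J\<^sub>1 * (t - ln (cosh t))" "J\<^sub>0 * bpsk_lb (- t) \<le> J\<^sub>0 * (- t - ln (cosh t))"
    unfolding J\<^sub>1 J\<^sub>0 using E ln_cosh_le[of t] by (intro mult_left_mono; simp add: bpsk_lb_def)+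
  ultimately show ?thesis unfolding t_def by simp
qed

lemma has_bochner_integral_gauss_c_bpsk_lb:
  assumes "proj = Re \<or> proj = Im"
  shows "has_bochner_integral lborel (\<lambda>y. gauss_c (y - c) * bpsk_lb (2 * proj c * proj y))
           (bpsk_lb_mean (proj c))"
proof -
  let ?r = "proj c"
  have "bpsk_lb (2 * ?r * u) = 0 + 2 * ?r * u + (- 2 * ?r\<^sup>2) * u ^ 2 + (4 * ?r ^ 4 / 3) * u ^ 4
      + (- 64 * ?r ^ 6 / 45) * u ^ 6" for u
    by (simp add: bpsk_lb_def power_mult_distrib)
  moreover have "0 + 2 * ?r * ?r + (- 2 * ?r\<^sup>2) * (?r\<^sup>2 + 1/2) + (4 * ?r ^ 4 / 3) * (?r ^ 4 + 3 * ?r\<^sup>2 + 3/4)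
      + (- 64 * ?r ^ 6 / 45) * (?r ^ 6 + 15/2 * ?r ^ 4 + 45/4 * ?r\<^sup>2 + 15/8) = bpsk_lb_mean ?r"
    unfolding bpsk_lb_mean_def by (simp add: field_simps flip: power_add) (simp add: power2_eq_square)
  ultimately show ?thesis
    using has_bochner_integral_gauss_c_coord_poly[OF assms, of c 0 "2 * ?r" "- 2 * ?r\<^sup>2" "4 * ?r ^ 4 / 3"
        "- 64 * ?r ^ 6 / 45"]
    by (simp only: Let_def)
qed

lemma bpsk_lb_mean_ge:
  assumes "r\<^sup>2 \<le> 1"
  shows "r\<^sup>2 - r ^ 4 - 27 * r ^ 6 \<le> bpsk_lb_mean r"
proof -
  define x where "x = r\<^sup>2"
  have x: "0 \<le> x" "x \<le> 1" using assms unfolding x_def by auto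
  have powers: "r ^ 4 = x\<^sup>2" "r ^ 6 = x ^ 3" "r ^ 8 = x ^ 4" "r ^ 10 = x ^ 5" "r ^ 12 = x ^ 6"
    unfolding x_def by (simp_all flip: power_mult)
  have "x ^ 4 \<le> x ^ 3" "x ^ 5 \<le> x ^ 3" "x ^ 6 \<le> x ^ 3" "0 \<le> x ^ 3"
    using x by (auto intro: power_decreasing)
  then show ?thesis
    unfolding bpsk_lb_mean_def powers x_def[symmetric] by linarith
qed

lemma bpsk_lb_mean_minus [simp]: "bpsk_lb_mean (- r) = bpsk_lb_mean r"
  by (simp add: bpsk_lb_mean_def)

lemma gauss_c_coords:
  assumes "(proj = Re \<and> oth = Im) \<or> (proj = Im \<and> oth = Re)"
  shows "gauss_c (y - c) = exp (- (proj y - proj c)\<^sup>2) * exp (- (oth y - oth c)\<^sup>2) / pi"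
  using assms by (auto simp: gauss_c_def cmod_power2 exp_add[symmetric])

text \<open>The means of the two hypotheses differ only in the sign of one coordinate, so the other
  coordinate factors out of the information density and the bit is a binary antipodal channel.\<close>
lemma bpsk_lb_mean_le_bit_mi:
  fixes proj oth :: "complex \<Rightarrow> real"
  assumes ev: "even m" and ok: "shaping_ok m p"
    and coords: "(proj = Re \<and> oth = Im) \<or> (proj = Im \<and> oth = Re)"
    and half: "\<And>b. bit_prob m p j b = 1/2"
    and J\<^sub>1: "\<And>y. joint_dens m p snr j True y = (gauss_c (y - c\<^sub>1) + gauss_c (y - c\<^sub>2)) / 4"
    and J\<^sub>0: "\<And>y. joint_dens m p snr j False y = (gauss_c (y - c\<^sub>3) + gauss_c (y - c\<^sub>4)) / 4"
    and c: "proj c\<^sub>1 = A" "proj c\<^sub>2 = A" "proj c\<^sub>3 = - A" "proj c\<^sub>4 = - A"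
      "oth c\<^sub>3 = oth c\<^sub>1" "oth c\<^sub>4 = oth c\<^sub>2"
  shows "bpsk_lb_mean A \<le> bit_mi m p snr j"
proof -
  have proj: "proj = Re \<or> proj = Im" using coords by blast
  define lower where "lower y =
    (gauss_c (y - c\<^sub>1) * bpsk_lb (2 * proj c\<^sub>1 * proj y) + gauss_c (y - c\<^sub>2) * bpsk_lb (2 * proj c\<^sub>2 * proj y)
     + gauss_c (y - c\<^sub>3) * bpsk_lb (2 * proj c\<^sub>3 * proj y)
     + gauss_c (y - c\<^sub>4) * bpsk_lb (2 * proj c\<^sub>4 * proj y)) / 4" for y
  have lower_integral: "has_bochner_integral lborel lower (bpsk_lb_mean A)"
  proof -
    have "has_bochner_integral lborel lower
        ((bpsk_lb_mean (proj c\<^sub>1) + bpsk_lb_mean (proj c\<^sub>2) + bpsk_lb_mean (proj c\<^sub>3)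
          + bpsk_lb_mean (proj c\<^sub>4)) / 4)"
      unfolding lower_def[abs_def]
      by (intro has_bochner_integral_divide_zero has_bochner_integral_add
          has_bochner_integral_gauss_c_bpsk_lb[OF proj])
    then show ?thesis by (simp add: c)
  qed
  have pointwise: "lower y \<le> bit_mi_integrand m p snr j False y + bit_mi_integrand m p snr j True y" for y
  proof -
    define H where "H = (exp (- (oth y - oth c\<^sub>1)\<^sup>2) + exp (- (oth y - oth c\<^sub>2)\<^sup>2)) / (4 * pi)"
    have H: "0 < H" unfolding H_def by (simp add: add_pos_pos)
    have J\<^sub>1': "joint_dens m p snr j True y = H * exp (- (proj y - A)\<^sup>2)"
      and J\<^sub>0': "joint_dens m p snr j False y = H * exp (- (proj y + A)\<^sup>2)"
      unfolding J\<^sub>1 J\<^sub>0 H_def gauss_c_coords[OF coords] c by (simp_all add: field_simps)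
    have "lower y = joint_dens m p snr j True y * bpsk_lb (2 * A * proj y)
        + joint_dens m p snr j False y * bpsk_lb (- 2 * A * proj y)"
      unfolding lower_def J\<^sub>1 J\<^sub>0 c by (simp add: algebra_simps add_divide_distrib)
    also have "\<dots> \<le> bit_mi_integrand m p snr j False y + bit_mi_integrand m p snr j True y"
      using bpsk_info_density_ge[OF H, of "proj y" A] joint_dens_True_plus_False[of m p snr j y]
      unfolding bit_mi_integrand_def half J\<^sub>1' J\<^sub>0' by (simp add: add.commute)
    finally show ?thesis .
  qed
  note integrable = integrable_bit_mi_integrand[OF ev ok]
  have "bpsk_lb_mean A = integral\<^sup>L lborel lower"
    using lower_integral by (simp add: has_bochner_integral_iff)
  also have "\<dots> \<le> (\<integral>y. bit_mi_integrand m p snr j False y + bit_mi_integrand m p snr j True y \<partial>lborel)"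
    using lower_integral
    by (intro Bochner_Integration.integral_mono Bochner_Integration.integrable_add integrable pointwise)
      (simp add: has_bochner_integral_iff)
  also have "\<dots> = bit_mi m p snr j"
    unfolding bit_mi_eq using integrable by (simp add: UNIV_bool)
  finally show ?thesis .
qed


section \<open>Shaping onto the four corners of the constellation\<close>

definition pam_top :: "nat \<Rightarrow> nat" where
  "pam_top n = 2 ^ n - 1"

definition qam_corners :: "nat \<Rightarrow> (nat \<times> nat) set" where
  "qam_corners n = {0, pam_top n} \<times> {0, pam_top n}"

text \<open>The first bit of each PAM label is fair, all others are \<open>0\<close>: by the Gray labelling this
  gives mass \<open>1/4\<close> to each corner of the QAM square, i.e. a QPSK input.\<close>
definition corner_shaping :: "nat \<Rightarrow> nat \<Rightarrow> real" where
  "corner_shaping m j = (if j = 0 \<or> j = m div 2 then 1/2 else 0)"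

lemma pam_top_Suc_pos: "0 < pam_top (Suc k)"
  unfolding pam_top_def using one_le_power[of "2::nat" k] by (simp only: power_Suc) linarith

lemma pam_top_less: "pam_top n < 2 ^ n"
  by (simp add: pam_top_def)

lemma pam_point_corners: "pam_point n 0 = - real (pam_top n)" "pam_point n (pam_top n) = real (pam_top n)"
  by (simp_all add: pam_point_def pam_top_def of_nat_diff)

lemma brgc_corner_bit:
  assumes a: "a \<in> {0, pam_top (Suc k)}" and j: "j < Suc k"
  shows "brgc (Suc k) ! a ! j \<longleftrightarrow> j = 0 \<and> a = pam_top (Suc k)"
proof (cases "a = 0")
  case True
  then show ?thesis using pam_top_Suc_pos[of k] j by (simp add: brgc_nth_0 del: replicate_Suc)
next
  case False
  then have a: "a = pam_top (Suc k)" using a by simp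
  show ?thesis
  proof (cases "j = 0")
    case True
    have "\<not> pam_top (Suc k) < 2 ^ k" by (simp add: pam_top_def)
    with True a show ?thesis using brgc_Suc_nth_head[OF pam_top_less] by simp
  next
    case False
    with a j show ?thesis using brgc_tail_zero_iff[OF pam_top_less] unfolding pam_top_def by auto
  qed
qed

lemma qam_label_corner_bit:
  assumes kk: "kk \<in> qam_corners (Suc k)" and j: "j < 2 * Suc k"
  shows "qam_label (Suc k) kk ! j \<longleftrightarrow>
    (j = 0 \<and> fst kk = pam_top (Suc k)) \<or> (j = Suc k \<and> snd kk = pam_top (Suc k))"
proof -
  obtain a b where kk': "kk = (a, b)" by (cases kk)
  have a: "a \<in> {0, pam_top (Suc k)}" and b: "b \<in> {0, pam_top (Suc k)}"
    using kk kk' by (auto simp: qam_corners_def)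
  have la: "length (brgc (Suc k) ! a) = Suc k"
    using a pam_top_less by (auto intro: length_brgc_nth)
  show ?thesis
  proof (cases "j < Suc k")
    case True
    then show ?thesis unfolding kk' qam_label_def using la brgc_corner_bit[OF a True] by (auto simp: nth_append)
  next
    case False
    then have "j - Suc k < Suc k" using j by simp
    with False show ?thesis
      unfolding kk' qam_label_def using la brgc_corner_bit[OF b] by (auto simp: nth_append)
  qed
qed

lemma prod_corner_bits:
  assumes a: "a < 2 ^ Suc k"
  shows "(\<Prod>j<Suc k. if j = 0 then 1/2 else if brgc (Suc k) ! a ! j then 0 else 1) =
    (if a \<in> {0, pam_top (Suc k)} then 1/2 else (0::real))"
proof -
  have "(\<Prod>j<Suc k. if j = 0 then 1/2 else if brgc (Suc k) ! a ! j then 0 else 1) =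
      1/2 * (\<Prod>j<k. if brgc (Suc k) ! a ! Suc j then 0 else (1::real))"
    by (simp add: prod.lessThan_Suc_shift del: prod.lessThan_Suc)
  also have "(\<Prod>j<k. if brgc (Suc k) ! a ! Suc j then 0 else (1::real)) =
      (if \<forall>j. 0 < j \<and> j < Suc k \<longrightarrow> \<not> brgc (Suc k) ! a ! j then 1 else 0)"
  proof (cases "\<forall>j. 0 < j \<and> j < Suc k \<longrightarrow> \<not> brgc (Suc k) ! a ! j")
    case False
    then obtain j where j: "0 < j" "j < Suc k" "brgc (Suc k) ! a ! j" by auto
    then obtain j' where "j = Suc j'" by (cases j) auto
    with j have "j' \<in> {..<k}" "brgc (Suc k) ! a ! Suc j'" by auto
    then show ?thesis using False by (auto intro!: prod_zero)
  qed (auto intro!: prod.neutral)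
  also have "1/2 * (if \<forall>j. 0 < j \<and> j < Suc k \<longrightarrow> \<not> brgc (Suc k) ! a ! j then 1 else 0) =
      (if a \<in> {0, pam_top (Suc k)} then 1/2 else (0::real))"
    unfolding brgc_tail_zero_iff[OF a] by (simp add: pam_top_def)
  finally show ?thesis .
qed

lemma sum_qam_corners:
  "(\<Sum>kk\<in>qam_corners (Suc k). F kk) =
     F (0, 0) + F (0, pam_top (Suc k)) + F (pam_top (Suc k), 0) + F (pam_top (Suc k), pam_top (Suc k))"
  using pam_top_Suc_pos[of k] by (simp add: qam_corners_def sum.cartesian_product add.assoc)

context
  fixes k m :: nat
  assumes m: "m = 2 * Suc k"
begin

lemma m_div_2: "m div 2 = Suc k"
  using m by simp

lemma sym_prob_corner_shaping:
  assumes kk: "kk \<in> qam_idx (Suc k)"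
  shows "sym_prob m (corner_shaping m) kk = (if kk \<in> qam_corners (Suc k) then 1/4 else 0)"
proof -
  obtain a b where kk': "kk = (a, b)" by (cases kk)
  have a: "a < 2 ^ Suc k" and b: "b < 2 ^ Suc k" using kk kk' by (auto simp: qam_idx_def)
  define f where "f j c = (if c then corner_shaping m j else 1 - corner_shaping m j)" for j c
  have prod_split: "(\<Prod>j<r + s. g j) = (\<Prod>j<r. g j) * (\<Prod>j<s. g (r + j))" for r s and g :: "nat \<Rightarrow> real"
    by (induction s) (simp_all add: mult.assoc)
  have "sym_prob m (corner_shaping m) kk = (\<Prod>j<Suc k + Suc k. f j (qam_label (Suc k) (a, b) ! j))"
    unfolding sym_prob_def f_def kk' m_div_2 using m by (simp add: mult_2)
  also have "\<dots> = (\<Prod>j<Suc k. f j (brgc (Suc k) ! a ! j)) * (\<Prod>j<Suc k. f (Suc k + j) (brgc (Suc k) ! b ! j))"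
    unfolding prod_split qam_label_def using length_brgc_nth[OF a] by (simp add: nth_append)
  also have "\<dots> = (\<Prod>j<Suc k. if j = 0 then 1/2 else if brgc (Suc k) ! a ! j then 0 else 1)
      * (\<Prod>j<Suc k. if j = 0 then 1/2 else if brgc (Suc k) ! b ! j then 0 else 1)"
    by (intro arg_cong2[where f = "(*)"] prod.cong refl) (auto simp: f_def corner_shaping_def m_div_2)
  finally show ?thesis
    unfolding prod_corner_bits[OF a] prod_corner_bits[OF b] kk' qam_corners_def by auto
qed

lemma sum_corner_shaping:
  fixes F :: "nat \<times> nat \<Rightarrow> 'a::real_field"
  shows "(\<Sum>kk\<in>qam_idx (Suc k). of_real (sym_prob m (corner_shaping m) kk) * F kk) =
    (\<Sum>kk\<in>qam_corners (Suc k). F kk) / 4"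
proof -
  have "(\<Sum>kk\<in>qam_idx (Suc k). of_real (sym_prob m (corner_shaping m) kk) * F kk) =
      (\<Sum>kk\<in>qam_idx (Suc k). if kk \<in> qam_corners (Suc k) then F kk / 4 else 0)"
    by (intro sum.cong refl) (simp add: sym_prob_corner_shaping)
  also have "\<dots> = (\<Sum>kk\<in>qam_idx (Suc k) \<inter> qam_corners (Suc k). F kk / 4)"
    by (simp add: sum.inter_restrict)
  also have "qam_idx (Suc k) \<inter> qam_corners (Suc k) = qam_corners (Suc k)"
    using pam_top_less[of "Suc k"] by (auto simp: qam_corners_def qam_idx_def)
  finally show ?thesis by (simp add: sum_divide_distrib)
qed

lemma sum_corner_shaping_real:
  "(\<Sum>kk\<in>qam_idx (Suc k). sym_prob m (corner_shaping m) kk * F kk) = (\<Sum>kk\<in>qam_corners (Suc k). F kk) / 4"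
  using sum_corner_shaping[of F] by simp

lemma sym_mean_corner_shaping: "sym_mean m (corner_shaping m) = 0"
  unfolding sym_mean_def m_div_2 sum_corner_shaping sum_qam_corners
  by (simp add: qam_point_def pam_point_corners complex_eq_iff)

lemma sym_var_corner_shaping: "sym_var m (corner_shaping m) = 2 * (real (pam_top (Suc k)))\<^sup>2"
  unfolding sym_var_def m_div_2 sum_corner_shaping_real sum_qam_corners sym_mean_corner_shaping
  by (simp add: qam_point_def pam_point_corners cmod_power2)

lemma shaping_ok_corner_shaping: "shaping_ok m (corner_shaping m)"
  using sym_var_corner_shaping pam_top_Suc_pos[of k]
  by (simp add: shaping_ok_def corner_shaping_def)

lemma signal_point_corner_shaping:
  assumes "a \<in> {0, pam_top (Suc k)}" "b \<in> {0, pam_top (Suc k)}"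
  shows "signal_point m (corner_shaping m) snr (a, b) =
    Complex (if a = 0 then - sqrt (snr / 2) else sqrt (snr / 2)) (if b = 0 then - sqrt (snr / 2) else sqrt (snr / 2))"
proof -
  have N: "0 < real (pam_top (Suc k))" using pam_top_Suc_pos[of k] by simp
  have "sqrt (sym_var m (corner_shaping m)) = sqrt 2 * real (pam_top (Suc k))"
    unfolding sym_var_corner_shaping using N by (simp add: real_sqrt_mult)
  with assms N show ?thesis
    unfolding signal_point_def norm_point_def m_div_2 sym_mean_corner_shaping qam_point_def
    by (auto simp: pam_point_corners complex_eq_iff Complex_eq real_sqrt_divide)
qed

lemma joint_dens_corner_shaping:
  assumes j: "j < m"
  shows "joint_dens m (corner_shaping m) snr j b y =
    (\<Sum>kk\<in>qam_corners (Suc k).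
       if ((j = 0 \<and> fst kk = pam_top (Suc k)) \<or> (j = Suc k \<and> snd kk = pam_top (Suc k))) = b
       then gauss_c (y - signal_point m (corner_shaping m) snr kk) else 0) / 4"
proof -
  have "joint_dens m (corner_shaping m) snr j b y = (\<Sum>kk\<in>qam_idx (Suc k). sym_prob m (corner_shaping m) kk *
      (if qam_label (Suc k) kk ! j = b then gauss_c (y - signal_point m (corner_shaping m) snr kk) else 0))"
    unfolding joint_dens_eq m_div_2 by (subst sum.inter_filter) (auto intro!: sum.cong)
  also have "\<dots> = (\<Sum>kk\<in>qam_corners (Suc k).
      if qam_label (Suc k) kk ! j = b then gauss_c (y - signal_point m (corner_shaping m) snr kk) else 0) / 4"
    by (rule sum_corner_shaping_real)
  also have "\<dots> = (\<Sum>kk\<in>qam_corners (Suc k).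
       if ((j = 0 \<and> fst kk = pam_top (Suc k)) \<or> (j = Suc k \<and> snd kk = pam_top (Suc k))) = b
       then gauss_c (y - signal_point m (corner_shaping m) snr kk) else 0) / 4"
    using qam_label_corner_bit j m by (intro arg_cong[where f = "\<lambda>x. x / 4"] sum.cong refl) auto
  finally show ?thesis .
qed

lemma bit_mi_corner_shaping_eq_0:
  assumes j: "j < m" "j \<noteq> 0" "j \<noteq> Suc k"
  shows "bit_mi m (corner_shaping m) snr j = 0"
proof -
  have ev: "even m" using m by simp
  have J\<^sub>1: "joint_dens m (corner_shaping m) snr j True y = 0" for y
    using joint_dens_corner_shaping[OF j(1), of snr True y] j by simp
  have J\<^sub>0: "joint_dens m (corner_shaping m) snr j False y = out_dens m (corner_shaping m) snr y" for y
    using joint_dens_corner_shaping[OF j(1), of snr False y] j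
    by (simp add: out_dens_eq m_div_2 sum_corner_shaping_real)
  have "bit_prob m (corner_shaping m) j False = 1"
    unfolding bit_prob_eq_bit_law[OF ev j(1)] using j m by (simp add: bit_law_def corner_shaping_def)
  moreover have "out_dens m (corner_shaping m) snr y \<noteq> 0" for y
    using out_dens_pos[OF ev shaping_ok_corner_shaping] by (metis less_irrefl)
  ultimately show ?thesis
    unfolding bit_mi_def by (simp add: UNIV_bool J\<^sub>1 J\<^sub>0)
qed

lemma bpsk_lb_mean_le_bit_mi_corner_shaping:
  assumes j: "j = 0 \<or> j = Suc k"
  shows "bpsk_lb_mean (sqrt (snr / 2)) \<le> bit_mi m (corner_shaping m) snr j"
proof -
  let ?A = "sqrt (snr / 2)" and ?T = "pam_top (Suc k)"
  have ev: "even m" and jm: "j < m" using m j by auto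
  have half: "bit_prob m (corner_shaping m) j b = 1/2" for b
    unfolding bit_prob_eq_bit_law[OF ev jm] using j m by (auto simp: bit_law_def corner_shaping_def)
  have joint: "joint_dens m (corner_shaping m) snr j b y =
      ((if ((j = 0 \<and> 0 = ?T) \<or> (j = Suc k \<and> 0 = ?T)) = b then gauss_c (y - Complex (- ?A) (- ?A)) else 0)
       + (if (j = Suc k) = b then gauss_c (y - Complex (- ?A) ?A) else 0)
       + (if (j = 0) = b then gauss_c (y - Complex ?A (- ?A)) else 0)
       + (if (j = 0 \<or> j = Suc k) = b then gauss_c (y - Complex ?A ?A) else 0)) / 4" for b y
    using pam_top_Suc_pos[of k]
    unfolding joint_dens_corner_shaping[OF jm] sum_qam_corners
    by (simp add: signal_point_corner_shaping)
  from j show ?thesis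
  proof
    assume j0: "j = 0"
    show ?thesis
      using pam_top_Suc_pos[of k] joint[unfolded j0] half[unfolded j0]
      unfolding j0
      by (intro bpsk_lb_mean_le_bit_mi[OF ev shaping_ok_corner_shaping, where proj = Re and oth = Im
            and c\<^sub>1 = "Complex ?A (- ?A)" and c\<^sub>2 = "Complex ?A ?A"
            and c\<^sub>3 = "Complex (- ?A) (- ?A)" and c\<^sub>4 = "Complex (- ?A) ?A"]) simp_all
  next
    assume j1: "j = Suc k"
    show ?thesis
      using pam_top_Suc_pos[of k] joint[unfolded j1] half[unfolded j1]
      unfolding j1
      by (intro bpsk_lb_mean_le_bit_mi[OF ev shaping_ok_corner_shaping, where proj = Im and oth = Re
            and c\<^sub>1 = "Complex (- ?A) ?A" and c\<^sub>2 = "Complex ?A ?A"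
            and c\<^sub>3 = "Complex (- ?A) (- ?A)" and c\<^sub>4 = "Complex ?A (- ?A)"]) simp_all
  qed
qed

lemma sum_bit_mi_corner_shaping_ge:
  "2 * bpsk_lb_mean (sqrt (snr / 2)) \<le> (\<Sum>j<m. bit_mi m (corner_shaping m) snr j)"
proof -
  have "(\<Sum>j<m. bit_mi m (corner_shaping m) snr j) =
      (\<Sum>j<m. (if j = 0 then bit_mi m (corner_shaping m) snr 0 else 0)
        + (if j = Suc k then bit_mi m (corner_shaping m) snr (Suc k) else 0))"
    using bit_mi_corner_shaping_eq_0 by (intro sum.cong refl) auto
  also have "\<dots> = bit_mi m (corner_shaping m) snr 0 + bit_mi m (corner_shaping m) snr (Suc k)"
    using m by (simp add: sum.distrib)
  finally show ?thesis
    using bpsk_lb_mean_le_bit_mi_corner_shaping[of 0 snr] bpsk_lb_mean_le_bit_mi_corner_shaping[of "Suc k" snr]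
    by simp
qed

end


lemma C_bicm_bounds:
  assumes "even m" "2 \<le> m" "0 \<le> snr"
  shows "2 * bpsk_lb_mean (sqrt (snr / 2)) \<le> C_bicm m snr" "C_bicm m snr \<le> ln (1 + snr)"
proof -
  obtain q where "m = 2 * q" using assms(1) by blast
  with assms(2) obtain k where m: "m = 2 * Suc k" by (cases q) auto
  let ?S = "(\<lambda>p. \<Sum>j<m. bit_mi m p snr j) ` {p. shaping_ok m p}"
  have mem: "(\<Sum>j<m. bit_mi m (corner_shaping m) snr j) \<in> ?S"
    using shaping_ok_corner_shaping[OF m] by blast
  have ub: "x \<le> ln (1 + snr)" if "x \<in> ?S" for x
    using that sum_bit_mi_le_ln[OF assms(1) _ assms(3)] by auto
  show "C_bicm m snr \<le> ln (1 + snr)"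
    unfolding C_bicm_def using mem ub by (intro cSup_least) auto
  have "(\<Sum>j<m. bit_mi m (corner_shaping m) snr j) \<le> C_bicm m snr"
    unfolding C_bicm_def using mem ub by (intro cSup_upper bdd_aboveI) auto
  with sum_bit_mi_corner_shaping_ge[OF m, of snr] show "2 * bpsk_lb_mean (sqrt (snr / 2)) \<le> C_bicm m snr"
    by linarith
qed

lemma ln_add_one_le_cubic: "0 \<le> x \<Longrightarrow> ln (1 + x) \<le> x - x\<^sup>2 / 2 + x ^ 3 / 3" for x :: real
proof -
  assume x: "0 \<le> x"
  have "(\<lambda>x. x - x\<^sup>2 / 2 + x ^ 3 / 3 - ln (1 + x)) 0 \<le> (\<lambda>x. x - x\<^sup>2 / 2 + x ^ 3 / 3 - ln (1 + x)) x"
  proof (rule DERIV_nonneg_imp_nondecreasing[OF x])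
    fix t :: real assume t: "0 \<le> t"
    have "1 - t + t\<^sup>2 - 1 / (1 + t) = t ^ 3 / (1 + t)"
      using t by (simp add: field_simps power2_eq_square power3_eq_cube)
    moreover have "0 \<le> t ^ 3 / (1 + t)" using t by simp
    ultimately show "\<exists>y. ((\<lambda>x. x - x\<^sup>2 / 2 + x ^ 3 / 3 - ln (1 + x)) has_field_derivative y) (at t) \<and> 0 \<le> y"
      using t by (intro exI[of _ "1 - t + t\<^sup>2 - 1 / (1 + t)"] conjI)
        (auto intro!: derivative_eq_intros simp: power2_eq_square)
  qed
  then show ?thesis by simp
qed

lemma C_bicm_expansion_error:
  assumes "even m" "2 \<le> m" "0 < snr" "snr \<le> 1"
  shows "\<bar>C_bicm m snr - (snr - snr\<^sup>2 / 2)\<bar> \<le> 7 * snr ^ 3"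
proof -
  let ?A = "sqrt (snr / 2)"
  have A2: "?A\<^sup>2 = snr / 2" using assms(3) by simp
  have "?A ^ 4 = (?A\<^sup>2)\<^sup>2" "?A ^ 6 = (?A\<^sup>2) ^ 3"
    by (simp_all flip: power_mult)
  then have "?A ^ 4 = (snr / 2)\<^sup>2" "?A ^ 6 = (snr / 2) ^ 3"
    unfolding A2 .
  then have "snr / 2 - (snr / 2)\<^sup>2 - 27 * (snr / 2) ^ 3 \<le> bpsk_lb_mean ?A"
    using bpsk_lb_mean_ge[of ?A] A2 assms(4) by simp
  then have "snr - snr\<^sup>2 / 2 - 27 * snr ^ 3 / 4 \<le> C_bicm m snr"
    using C_bicm_bounds(1)[of m snr] assms by (simp add: power_divide)
  moreover have "C_bicm m snr \<le> snr - snr\<^sup>2 / 2 + snr ^ 3 / 3"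
    using C_bicm_bounds(2)[of m snr] ln_add_one_le_cubic[of snr] assms by simp
  moreover have "0 < snr ^ 3" using assms(3) by simp
  ultimately show ?thesis by (simp add: abs_le_iff)
qed

theorem theorem2:
  fixes m :: nat
  assumes "even m" and "m \<ge> 2"
  shows "(\<lambda>snr. C_bicm m snr - (1 * snr + (- 1 / 2) * snr ^ 2)) \<in> o[at_right 0](\<lambda>snr. snr ^ 2)"
proof -
  have "eventually (\<lambda>s. norm (C_bicm m s - (1 * s + (- 1 / 2) * s ^ 2)) \<le> 7 * norm (s ^ 3))
      (at_right (0::real))"
    unfolding eventually_at_right_field
    using C_bicm_expansion_error[OF assms] by (intro exI[of _ 1]) auto
  then have "(\<lambda>s. C_bicm m s - (1 * s + (- 1 / 2) * s ^ 2)) \<in> O[at_right 0](\<lambda>s. s ^ 3)"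
    by (rule bigoI)
  moreover have "(\<lambda>s::real. s ^ 3) \<in> o[at_right 0](\<lambda>s. s ^ 2)"
    by real_asymp
  ultimately show ?thesis
    by (rule landau_o.big_small_trans)
qed

end
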